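(* Let $\alpha>0$, let $C_n=\bigl(1/\max\{i,j\}\bigr)_{i,j=1}^n$, and let $A_n=(\alpha I_n+C_n)^{-1}$ for $n\in\mathbb N$. Then each $A_n$ is Hermitian positive definite, $\inf_n\min\{|z|:z\in\sigma(A_n)\}>0$ and $\sup_n\|A_n\|_\infty<\infty$, but $\sup_n\|A_n^{-1}\|_\infty=\infty$.
   Context: $\|\cdot\|_\infty$ is the operator norm induced by the max-norm on $\mathbb C^n$ (maximum absolute row sum); $\sigma(\cdot)$ denotes the spectrum. *)

theory Defs
  imports "Jordan_Normal_Form.Char_Poly"
begin

text \<open>The matrix C_n = (1 / max{i,j})_{i,j=1..n}; JNF matrices are 0-indexed,
  so entry (i,j) with i,j < n corresponds to the paper's entry (i+1,j+1).\<close>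
definition Cmat :: "nat \<Rightarrow> complex mat" where
  "Cmat n = mat n n (\<lambda>(i,j). 1 / of_nat (max (i+1) (j+1)))"

definition mat_inv :: "complex mat \<Rightarrow> complex mat" where
  "mat_inv M = (SOME B. B \<in> carrier_mat (dim_row M) (dim_row M) \<and> inverts_mat M B \<and> inverts_mat B M)"

definition Amat :: "real \<Rightarrow> nat \<Rightarrow> complex mat" where
  "Amat \<alpha> n = mat_inv (complex_of_real \<alpha> \<cdot>\<^sub>m 1\<^sub>m n + Cmat n)"

definition hermitian_mat :: "complex mat \<Rightarrow> bool" where
  "hermitian_mat A \<longleftrightarrow> square_mat A \<and>
     (\<forall>i < dim_row A. \<forall>j < dim_row A. A $$ (j,i) = cnj (A $$ (i,j)))"

definition hermitian_pos_def :: "complex mat \<Rightarrow> bool" where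
  "hermitian_pos_def A \<longleftrightarrow> hermitian_mat A \<and>
     (\<forall>v \<in> carrier_vec (dim_row A). v \<noteq> 0\<^sub>v (dim_row A) \<longrightarrow>
        (let q = (A *\<^sub>v v) \<bullet>c v in q \<in> \<real> \<and> Re q > 0))"

definition spectrum_mat :: "complex mat \<Rightarrow> complex set" where
  "spectrum_mat A = {z. eigenvalue A z}"

text \<open>Operator norm induced by the max-norm: maximum absolute row sum.\<close>
definition norm_inf_mat :: "complex mat \<Rightarrow> real" where
  "norm_inf_mat A = Max {\<Sum>j<dim_col A. cmod (A $$ (i,j)) | i. i < dim_row A}"

end

theory Submission
  imports Defs "Jordan_Normal_Form.Spectral_Radius" "HOL-Analysis.Harmonic_Numbers"
begin

(*
  Write M_n = alpha I + C_n, so that A_n is the inverse of M_n. Telescoping gives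
  1 / max(i+1, j+1) = sum of w_m over max(i,j) <= m < n with positive weights w_m, i.e.
  C_n = sum_m w_m e_m e_m^* where e_m is the indicator vector of {0..m}. Hence C_n is positive
  semidefinite, M_n is Hermitian positive definite, and so is its inverse A_n.

  The same layer decomposition yields a discrete maximum principle: at an index i where
  |(C_n u)_i| is maximal, Re (conj (C_n u)_i * u_i) >= 0, so |(C_n u)_i| <= |(M_n u)_i|. It follows
  that |u|_max <= (2 / alpha) |M_n u|_max, i.e. the row sums of A_n are at most 2 / alpha.

  A Schur test with the weights (j+1)^(-1/2) bounds every eigenvalue of M_n by alpha + 4, so the
  eigenvalues of A_n are at least 1 / (alpha + 4). Finally, the first row of M_n has absolute sum
  at least the harmonic number H_n, so the row-sum norm of the inverse of A_n is unbounded.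
*)

(* Harmonic_Numbers brings along the vectors of HOL-Analysis, whose syntax clashes with
   that of Jordan_Normal_Form. *)
unbundle no vec_syntax
hide_type (open) Finite_Cartesian_Product.vec
hide_const (open) Finite_Cartesian_Product.mat Finite_Cartesian_Product.vec

lemma inverse_sqrt_le_diff_sqrt:
  "1 / sqrt (real m + 1) \<le> 2 * (sqrt (real m + 1) - sqrt (real m))"
proof -
  let ?a = "sqrt (real m + 1)" and ?b = "sqrt (real m)"
  have "(?a - ?b) * (?a + ?b) = 1"
    by (simp add: algebra_simps)
  moreover have "(?a - ?b) * (?a + ?b) \<le> (?a - ?b) * (2 * ?a)"
    by (intro mult_left_mono) auto
  ultimately have "1 \<le> 2 * (?a - ?b) * ?a"
    by (simp add: algebra_simps)
  then show ?thesis
    by (simp add: pos_divide_le_eq)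
qed

lemma sum_inverse_sqrt_le: "(\<Sum>j<m. 1 / sqrt (real j + 1)) \<le> 2 * sqrt (real m)"
proof -
  have "(\<Sum>j<m. 1 / sqrt (real j + 1)) \<le> (\<Sum>j<m. 2 * sqrt (real (Suc j)) - 2 * sqrt (real j))"
    by (intro sum_mono) (use inverse_sqrt_le_diff_sqrt in \<open>simp add: algebra_simps\<close>)
  also have "\<dots> = 2 * sqrt (real m)"
    using sum_Suc_diff'[of 0 m "\<lambda>j. 2 * sqrt (real j)"] by (simp add: lessThan_atLeast0)
  finally show ?thesis .
qed

lemma inverse_sqrt_cube_le_diff:
  fixes t :: real
  assumes "t \<ge> 1"
  shows "1 / ((t + 1) * sqrt (t + 1)) \<le> 2 / sqrt t - 2 / sqrt (t + 1)"
proof -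
  define a where "a = sqrt (t + 1)"
  define b where "b = sqrt t"
  have b: "0 < b" "b \<le> a" and a: "0 < a"
    using assms by (auto simp: a_def b_def)
  have "(a - b) * (a + b) = 1"
    using assms by (simp add: a_def b_def algebra_simps)
  then have "a - b = 1 / (a + b)"
    using a b by (simp add: eq_divide_eq)
  moreover have "2 / b - 2 / a = 2 * (a - b) / (a * b)"
    using a b by (simp add: field_simps)
  ultimately have diff: "2 / b - 2 / a = 2 / (a * b * (a + b))"
    by simp
  have "a * b * (a + b) \<le> (a * a) * (2 * a)"
    using a b by (intro mult_mono) auto
  have "1 / ((t + 1) * sqrt (t + 1)) = 2 / ((a * a) * (2 * a))"
    using assms by (simp add: a_def)
  also have "\<dots> \<le> 2 / (a * b * (a + b))"
    using a b \<open>a * b * (a + b) \<le> (a * a) * (2 * a)\<close> by (intro frac_le) auto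
  finally show ?thesis
    using diff by (simp add: a_def b_def)
qed

lemma sum_inverse_sqrt_cube_le:
  "(\<Sum>j\<in>{i<..<n}. 1 / ((real j + 1) * sqrt (real j + 1))) \<le> 2 / sqrt (real i + 1)"
proof (cases "i < n")
  case True
  have "(\<Sum>j\<in>{i<..<n}. 1 / ((real j + 1) * sqrt (real j + 1)))
      \<le> (\<Sum>j\<in>{Suc i..<n}. 2 / sqrt (real j) - 2 / sqrt (real (Suc j)))"
    unfolding atLeastSucLessThan_greaterThanLessThan[symmetric]
  proof (intro sum_mono)
    fix j assume "j \<in> {Suc i..<n}"
    then show "1 / ((real j + 1) * sqrt (real j + 1)) \<le> 2 / sqrt (real j) - 2 / sqrt (real (Suc j))"
      using inverse_sqrt_cube_le_diff[of "real j"] by (simp add: add.commute)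
  qed
  also have "\<dots> = 2 / sqrt (real i + 1) - 2 / sqrt (real n)"
    using sum_Suc_diff'[of "Suc i" n "\<lambda>j. - 2 / sqrt (real j)"] True by (simp add: sum_negf)
  also have "\<dots> \<le> 2 / sqrt (real i + 1)"
    by simp
  finally show ?thesis .
qed simp

(* The Schur test for C_n with the weight vector ((j+1)^(-1/2))_j. *)
lemma schur_weight_bound:
  assumes "i < n"
  shows "(\<Sum>j<n. 1 / (sqrt (real j + 1) * real (max (i+1) (j+1)))) \<le> 4 / sqrt (real i + 1)"
proof -
  let ?f = "\<lambda>j. 1 / (sqrt (real j + 1) * real (max (i+1) (j+1)))"
  have "{..<i+1} \<union> {i<..<n} = {..<n}"
    using assms by auto
  moreover have "(\<Sum>j\<in>{..<i+1} \<union> {i<..<n}. ?f j) = (\<Sum>j<i+1. ?f j) + (\<Sum>j\<in>{i<..<n}. ?f j)"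
    by (rule sum.union_disjoint) auto
  ultimately have "(\<Sum>j<n. ?f j) = (\<Sum>j<i+1. ?f j) + (\<Sum>j\<in>{i<..<n}. ?f j)"
    by simp
  also have "(\<Sum>j<i+1. ?f j) = (\<Sum>j<i+1. 1 / sqrt (real j + 1) / (real i + 1))"
    by (intro sum.cong) (auto simp: max_def)
  also have "\<dots> = (\<Sum>j<i+1. 1 / sqrt (real j + 1)) / (real i + 1)"
    by (rule sum_divide_distrib[symmetric])
  also have "\<dots> \<le> 2 * sqrt (real i + 1) / (real i + 1)"
    using sum_inverse_sqrt_le[of "i+1"] by (intro divide_right_mono) (auto simp: add.commute)
  also have "2 * sqrt (real i + 1) / (real i + 1) = 2 / sqrt (real i + 1)"
    using sqrt_divide_self_eq[of "real i + 1"] by (simp add: divide_inverse)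
  also have "(\<Sum>j\<in>{i<..<n}. ?f j) = (\<Sum>j\<in>{i<..<n}. 1 / ((real j + 1) * sqrt (real j + 1)))"
    by (intro sum.cong) (auto simp: max_def mult.commute)
  also have "\<dots> \<le> 2 / sqrt (real i + 1)"
    by (rule sum_inverse_sqrt_cube_le)
  finally show ?thesis
    by simp
qed

lemma not_bdd_above_if_harm_le:
  fixes f :: "nat \<Rightarrow> real"
  assumes "\<And>n. n \<ge> 1 \<Longrightarrow> harm n \<le> f n"
  shows "\<not> bdd_above (f ` {1..})"
proof
  assume "bdd_above (f ` {1..})"
  then obtain B where B: "\<And>n. n \<ge> 1 \<Longrightarrow> f n \<le> B"
    by (auto simp: bdd_above_def)
  obtain N where N: "\<And>n. n \<ge> N \<Longrightarrow> B + 1 \<le> harm n"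
    using harm_at_top unfolding filterlim_at_top eventually_sequentially by blast
  have "B + 1 \<le> f (Suc N)"
    using N[of "Suc N"] assms[of "Suc N"] by linarith
  then show False
    using B[of "Suc N"] by simp
qed

lemma ex_arg_max_lessThan:
  fixes f :: "nat \<Rightarrow> 'a::linorder"
  assumes "0 < n"
  obtains i where "i < n" "\<And>k. k < n \<Longrightarrow> f k \<le> f i"
proof -
  have "Max (f ` {..<n}) \<in> f ` {..<n}"
    using assms by (intro Max_in) auto
  then obtain i where "i < n" "f i = Max (f ` {..<n})"
    by auto
  then show thesis
    using that[of i] by simp
qed

lemma Re_cnj_mult_diff_nonneg:
  assumes "cmod b \<le> cmod a"
  shows "0 \<le> Re (cnj a * (a - b))"
proof -
  have "Re (cnj a * b) \<le> cmod a * cmod b"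
    using complex_Re_le_cmod[of "cnj a * b"] by (simp add: norm_mult)
  also have "\<dots> \<le> cmod a ^ 2"
    using assms by (simp add: power2_eq_square mult_left_mono)
  also have "cmod a ^ 2 = Re (cnj a * a)"
    by (simp add: complex_mult_cnj cmod_power2 mult.commute)
  finally show ?thesis
    by (simp add: right_diff_distrib)
qed

lemma cmod_add_power2: "cmod (a + b) ^ 2 = cmod a ^ 2 + 2 * Re (cnj a * b) + cmod b ^ 2"
  unfolding cmod_power2 by (simp add: power2_eq_square algebra_simps)

lemma mult_cnj_sgn: "z * cnj (sgn z) = of_real (cmod z)"
proof (cases "z = 0")
  case False
  then show ?thesis
    by (simp add: sgn_eq complex_norm_square[symmetric] power2_eq_square)
qed simp

section \<open>The matrix C_n acting on sequences\<close>

definition Capply :: "nat \<Rightarrow> (nat \<Rightarrow> complex) \<Rightarrow> nat \<Rightarrow> complex" where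
  "Capply n u k = (\<Sum>j<n. u j / of_nat (max (k+1) (j+1)))"

(* C_n = sum_m layer_weight n m * e_m e_m^*, with e_m the indicator vector of {0..m}; see
   inverse_max_eq_sum_layer_weight. *)
definition layer_weight :: "nat \<Rightarrow> nat \<Rightarrow> real" where
  "layer_weight n m = 1 / real (m+1) - (if Suc m < n then 1 / real (m+2) else 0)"

lemma layer_weight_pos: "layer_weight n m > 0"
  by (simp add: layer_weight_def frac_less2)

lemma sum_layer_weight:
  assumes "a < n"
  shows "(\<Sum>m\<in>{a..<n}. layer_weight n m) = 1 / real (a+1)"
proof -
  define g where "g m = (if m < n then 1 / real (m+1) else 0)" for m
  have "(\<Sum>m\<in>{a..<n}. layer_weight n m) = - (\<Sum>m\<in>{a..<n}. g (Suc m) - g m)"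
    by (simp add: sum_negf[symmetric] layer_weight_def g_def) (intro sum.cong; auto)
  also have "\<dots> = 1 / real (a+1)"
    using assms by (subst sum_Suc_diff') (auto simp: g_def)
  finally show ?thesis .
qed

lemma inverse_max_eq_sum_layer_weight:
  assumes "k < n" "j < n"
  shows "1 / real (max (k+1) (j+1)) = (\<Sum>m\<in>{m\<in>{k..<n}. j \<le> m}. layer_weight n m)"
proof -
  have "{m\<in>{k..<n}. j \<le> m} = {max k j..<n}"
    by auto
  then show ?thesis
    using assms sum_layer_weight[of "max k j" n] by simp
qed

lemma Capply_eq_layer_sum:
  assumes "k < n"
  shows "Capply n u k = (\<Sum>m\<in>{k..<n}. of_real (layer_weight n m) * (\<Sum>j\<le>m. u j))"
proof -
  have "Capply n u k = (\<Sum>j<n. \<Sum>m\<in>{m\<in>{k..<n}. j \<le> m}. of_real (layer_weight n m) * u j)"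
    unfolding Capply_def
  proof (intro sum.cong refl)
    fix j assume "j \<in> {..<n}"
    then have "1 / real (max (k+1) (j+1)) = (\<Sum>m\<in>{m\<in>{k..<n}. j \<le> m}. layer_weight n m)"
      using assms by (intro inverse_max_eq_sum_layer_weight) auto
    moreover have "u j / of_nat (max (k+1) (j+1)) = u j * of_real (1 / real (max (k+1) (j+1)))"
      by simp
    ultimately have "u j / of_nat (max (k+1) (j+1)) = u j * of_real (\<Sum>m\<in>{m\<in>{k..<n}. j \<le> m}. layer_weight n m)"
      by simp
    then show "u j / of_nat (max (k+1) (j+1)) = (\<Sum>m\<in>{m\<in>{k..<n}. j \<le> m}. of_real (layer_weight n m) * u j)"
      by (simp add: sum_distrib_left mult.commute)
  qed
  also have "\<dots> = (\<Sum>m\<in>{k..<n}. \<Sum>j\<in>{j\<in>{..<n}. j \<le> m}. of_real (layer_weight n m) * u j)"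
    by (rule sum.swap_restrict) auto
  also have "\<dots> = (\<Sum>m\<in>{k..<n}. of_real (layer_weight n m) * (\<Sum>j\<le>m. u j))"
  proof (intro sum.cong refl)
    fix m assume "m \<in> {k..<n}"
    then have "{j\<in>{..<n}. j \<le> m} = {..m}"
      by auto
    then show "(\<Sum>j\<in>{j\<in>{..<n}. j \<le> m}. of_real (layer_weight n m) * u j) = of_real (layer_weight n m) * (\<Sum>j\<le>m. u j)"
      by (simp add: sum_distrib_left)
  qed
  finally show ?thesis .
qed

lemma Capply_quadratic_form:
  "(\<Sum>k<n. u k * cnj (Capply n u k)) = of_real (\<Sum>m<n. layer_weight n m * cmod (\<Sum>j\<le>m. u j) ^ 2)"
proof -
  let ?W = "\<lambda>m. \<Sum>j\<le>m. u j"
  have "(\<Sum>k<n. u k * cnj (Capply n u k))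
      = (\<Sum>k<n. \<Sum>m\<in>{m\<in>{..<n}. k \<le> m}. of_real (layer_weight n m) * (u k * cnj (?W m)))"
  proof (intro sum.cong refl)
    fix k assume "k \<in> {..<n}"
    then have "u k * cnj (Capply n u k) = u k * (\<Sum>m\<in>{k..<n}. of_real (layer_weight n m) * cnj (?W m))"
      by (simp only: Capply_eq_layer_sum lessThan_iff cnj_sum[of _ "{k..<n}"] complex_cnj_mult
          complex_cnj_complex_of_real)
    also have "\<dots> = (\<Sum>m\<in>{k..<n}. of_real (layer_weight n m) * (u k * cnj (?W m)))"
      unfolding sum_distrib_left by (intro sum.cong refl) (rule mult.left_commute)
    also have "{k..<n} = {m\<in>{..<n}. k \<le> m}"
      by auto
    finally show "u k * cnj (Capply n u k) = (\<Sum>m\<in>{m\<in>{..<n}. k \<le> m}. of_real (layer_weight n m) * (u k * cnj (?W m)))" .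
  qed
  also have "\<dots> = (\<Sum>m<n. \<Sum>k\<in>{k\<in>{..<n}. k \<le> m}. of_real (layer_weight n m) * (u k * cnj (?W m)))"
    by (rule sum.swap_restrict) auto
  also have "\<dots> = (\<Sum>m<n. of_real (layer_weight n m) * (?W m * cnj (?W m)))"
  proof (intro sum.cong refl)
    fix m assume "m \<in> {..<n}"
    then have "{k\<in>{..<n}. k \<le> m} = {..m}"
      by auto
    then show "(\<Sum>k\<in>{k\<in>{..<n}. k \<le> m}. of_real (layer_weight n m) * (u k * cnj (?W m))) = of_real (layer_weight n m) * (?W m * cnj (?W m))"
      by (simp only: sum_distrib_left[symmetric] sum_distrib_right[symmetric])
  qed
  also have "\<dots> = of_real (\<Sum>m<n. layer_weight n m * cmod (?W m) ^ 2)"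
    by (simp only: of_real_sum of_real_mult complex_norm_square)
  finally show ?thesis .
qed

(* With x = C_n u and partial sums W_m = u_0 + ... + u_m one has x_k - x_(k+1) = w_k W_k, where
   x_n = 0. At a maximiser i of |x| this makes Re (conj x_i * W_i) nonnegative and
   Re (conj x_i * W_(i-1)) nonpositive, and u_i = W_i - W_(i-1). *)
lemma Capply_max_principle:
  assumes i: "i < n" and max: "\<And>k. k < n \<Longrightarrow> cmod (Capply n u k) \<le> cmod (Capply n u i)"
  shows "0 \<le> Re (cnj (Capply n u i) * u i)"
proof -
  define W where "W m = (\<Sum>j\<le>m. u j)" for m
  define x where "x k = (\<Sum>m\<in>{k..<n}. of_real (layer_weight n m) * W m)" for k
  have Capply_x: "Capply n u i = x i"
    using i by (simp add: Capply_eq_layer_sum x_def W_def)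
  have x_max: "cmod (x k) \<le> cmod (x i)" if "k \<le> n" for k
  proof (cases "k = n")
    case False
    then show ?thesis
      using max[of k] that i by (simp add: Capply_eq_layer_sum x_def W_def)
  qed (simp add: x_def)
  have W_eq: "W k = (x k - x (Suc k)) / of_real (layer_weight n k)" if "k < n" for k
    using that layer_weight_pos[of n k] by (simp add: x_def sum.atLeast_Suc_lessThan field_simps)
  have W_i: "0 \<le> Re (cnj (x i) * W i)"
    using Re_cnj_mult_diff_nonneg[OF x_max[of "Suc i"]] i layer_weight_pos[of n i]
    by (simp add: W_eq)
  have W_pred: "Re (cnj (x i) * W p) \<le> 0" if "i = Suc p" for p
  proof -
    have "0 \<le> Re (cnj (x i) * (x i - x p)) / layer_weight n p"
      using Re_cnj_mult_diff_nonneg[OF x_max[of p]] that i layer_weight_pos[of n p] by simp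
    moreover have "cnj (x i) * W p = - (cnj (x i) * (x i - x p)) / of_real (layer_weight n p)"
      using that i by (simp add: W_eq algebra_simps)
    ultimately show ?thesis
      by (simp del: complex_cnj_diff minus_diff_eq)
  qed
  show ?thesis
    unfolding Capply_x
  proof (cases i)
    case 0
    then show "0 \<le> Re (cnj (x i) * u i)"
      using W_i by (simp add: W_def)
  next
    case (Suc p)
    then have "u i = W i - W p"
      by (simp add: W_def)
    then show "0 \<le> Re (cnj (x i) * u i)"
      using W_i W_pred[OF Suc] by (simp add: right_diff_distrib)
  qed
qed

lemma norm_Capply_le_norm_shift:
  assumes "\<alpha> \<ge> 0" "i < n" "\<And>k. k < n \<Longrightarrow> cmod (Capply n u k) \<le> cmod (Capply n u i)"
  shows "cmod (Capply n u i) \<le> cmod (of_real \<alpha> * u i + Capply n u i)"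
proof -
  let ?a = "Capply n u i" and ?b = "of_real \<alpha> * u i"
  have "0 \<le> Re (cnj ?a * ?b)"
    using Capply_max_principle[OF assms(2,3)] assms(1) by (simp add: mult.left_commute)
  then have "cmod ?a ^ 2 \<le> cmod (?a + ?b) ^ 2"
    using cmod_add_power2[of ?a ?b] zero_le_power2[of "cmod ?b"] by linarith
  then show ?thesis
    by (subst add.commute) (rule power2_le_imp_le; simp)
qed

lemma Capply_solution_bound:
  assumes "\<alpha> > 0" and Y: "\<And>k. k < n \<Longrightarrow> cmod (of_real \<alpha> * u k + Capply n u k) \<le> Y" and "k < n"
  shows "cmod (u k) \<le> 2 * Y / \<alpha>"
proof -
  obtain i where i: "i < n" and max: "\<And>k. k < n \<Longrightarrow> cmod (Capply n u k) \<le> cmod (Capply n u i)"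
    using ex_arg_max_lessThan[of n "\<lambda>k. cmod (Capply n u k)"] \<open>k < n\<close> by auto
  have "cmod (Capply n u k) \<le> cmod (of_real \<alpha> * u i + Capply n u i)"
    using max[OF \<open>k < n\<close>] norm_Capply_le_norm_shift[of \<alpha> i n u] assms(1) i max by force
  also have "\<dots> \<le> Y"
    using Y i by blast
  finally have "cmod (Capply n u k) \<le> Y" .
  moreover have "\<alpha> * cmod (u k) \<le> cmod (of_real \<alpha> * u k + Capply n u k) + cmod (Capply n u k)"
    using norm_triangle_ineq4[of "of_real \<alpha> * u k + Capply n u k" "Capply n u k"] assms(1)
    by (simp add: norm_mult)
  ultimately have "\<alpha> * cmod (u k) \<le> 2 * Y"
    using Y[OF \<open>k < n\<close>] by linarith
  then show ?thesis
    using assms(1) by (simp add: field_simps)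
qed

lemma norm_Capply_le_weighted_max:
  assumes i: "i < n" and G: "\<And>j. j < n \<Longrightarrow> cmod (u j) * sqrt (real j + 1) \<le> G"
  shows "cmod (Capply n u i) \<le> 4 * G / sqrt (real i + 1)"
proof -
  have "0 \<le> G"
    using G[OF i] by (rule order_trans[rotated]) simp
  have "cmod (Capply n u i) \<le> (\<Sum>j<n. cmod (u j / of_nat (max (i+1) (j+1))))"
    unfolding Capply_def by (rule norm_sum)
  also have "\<dots> = (\<Sum>j<n. cmod (u j) / real (max (i+1) (j+1)))"
    by (simp only: norm_divide norm_of_nat)
  also have "\<dots> \<le> (\<Sum>j<n. G * (1 / (sqrt (real j + 1) * real (max (i+1) (j+1)))))"
  proof (intro sum_mono)
    fix j assume "j \<in> {..<n}"
    then have "cmod (u j) \<le> G / sqrt (real j + 1)"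
      using G[of j] by (simp add: field_simps)
    then have "cmod (u j) / real (max (i+1) (j+1)) \<le> G / sqrt (real j + 1) / real (max (i+1) (j+1))"
      by (rule divide_right_mono) simp
    then show "cmod (u j) / real (max (i+1) (j+1)) \<le> G * (1 / (sqrt (real j + 1) * real (max (i+1) (j+1))))"
      by simp
  qed
  also have "\<dots> \<le> G * (4 / sqrt (real i + 1))"
    unfolding sum_distrib_left[symmetric] using schur_weight_bound[OF i] \<open>0 \<le> G\<close>
    by (rule mult_left_mono)
  finally show ?thesis
    by (simp add: mult.commute)
qed

lemma Capply_eigenvalue_bound:
  assumes "\<alpha> \<ge> 0" and eigen: "\<And>k. k < n \<Longrightarrow> of_real \<alpha> * v k + Capply n v k = \<mu> * v k"
    and "k0 < n" "v k0 \<noteq> 0"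
  shows "cmod \<mu> \<le> \<alpha> + 4"
proof -
  define g where "g k = cmod (v k) * sqrt (real k + 1)" for k
  obtain i where i: "i < n" and max: "\<And>k. k < n \<Longrightarrow> g k \<le> g i"
    using ex_arg_max_lessThan[of n g] \<open>k0 < n\<close> by auto
  have "0 < g k0"
    using \<open>v k0 \<noteq> 0\<close> by (simp add: g_def)
  then have "v i \<noteq> 0"
    using max[OF \<open>k0 < n\<close>] by (auto simp: g_def)
  have "cmod (Capply n v i) \<le> 4 * g i / sqrt (real i + 1)"
    by (rule norm_Capply_le_weighted_max[OF i]) (use max in \<open>simp add: g_def\<close>)
  also have "\<dots> = 4 * cmod (v i)"
    by (simp add: g_def)
  finally have "cmod \<mu> * cmod (v i) \<le> \<alpha> * cmod (v i) + 4 * cmod (v i)"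
    using eigen[OF i] norm_triangle_ineq[of "of_real \<alpha> * v i" "Capply n v i"] \<open>\<alpha> \<ge> 0\<close>
    by (simp add: norm_mult)
  then have "cmod \<mu> * cmod (v i) \<le> (\<alpha> + 4) * cmod (v i)"
    by (simp add: distrib_right)
  then show ?thesis
    using \<open>v i \<noteq> 0\<close> by (simp add: mult_le_cancel_right)
qed

section \<open>Inverses, Hermitian matrices and the row-sum norm\<close>

lemma mat_inv_inverts:
  assumes M: "M \<in> carrier_mat n n" and "det M \<noteq> 0"
  shows "mat_inv M \<in> carrier_mat n n" "M * mat_inv M = 1\<^sub>m n" "mat_inv M * M = 1\<^sub>m n"
proof -
  let ?P = "\<lambda>B. B \<in> carrier_mat (dim_row M) (dim_row M) \<and> inverts_mat M B \<and> inverts_mat B M"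
  obtain B where "B \<in> carrier_mat n n" "B * M = 1\<^sub>m n" "M * B = 1\<^sub>m n"
    using det_non_zero_imp_unit[OF assms] unfolding Units_def ring_mat_def by auto
  then have "?P B"
    using M unfolding inverts_mat_def by auto
  then have "?P (mat_inv M)"
    unfolding mat_inv_def by (rule someI)
  then show "mat_inv M \<in> carrier_mat n n" "M * mat_inv M = 1\<^sub>m n" "mat_inv M * M = 1\<^sub>m n"
    using M unfolding inverts_mat_def by auto
qed

lemma mat_inv_eqI:
  assumes A: "A \<in> carrier_mat n n" and B: "B \<in> carrier_mat n n"
    and AB: "A * B = 1\<^sub>m n" and BA: "B * A = 1\<^sub>m n"
  shows "mat_inv A = B"
  unfolding mat_inv_def
proof (rule some_equality)
  show "B \<in> carrier_mat (dim_row A) (dim_row A) \<and> inverts_mat A B \<and> inverts_mat B A"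
    using assms unfolding inverts_mat_def by auto
next
  fix B' assume "B' \<in> carrier_mat (dim_row A) (dim_row A) \<and> inverts_mat A B' \<and> inverts_mat B' A"
  then have B': "B' \<in> carrier_mat n n" and AB': "A * B' = 1\<^sub>m n"
    using A unfolding inverts_mat_def by auto
  have "B' = (B * A) * B'"
    using B' BA by simp
  also have "\<dots> = B * (A * B')"
    using A B B' by (simp add: assoc_mult_mat[of _ n n _ n _ n])
  finally show "B' = B"
    using AB' B by simp
qed

lemma hermitian_mat_inverse:
  assumes herm: "hermitian_mat M" and M: "M \<in> carrier_mat n n" and A: "A \<in> carrier_mat n n"
    and MA: "M * A = 1\<^sub>m n"
  shows "hermitian_mat A"
proof -
  define B where "B = mat n n (\<lambda>(i, j). cnj (A $$ (j, i)))"
  have B: "B \<in> carrier_mat n n"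
    by (simp add: B_def)
  have dims: "dim_row M = n" "dim_col M = n" "dim_row A = n" "dim_col A = n"
    using M A by auto
  have "B * M = 1\<^sub>m n"
  proof (rule eq_matI)
    fix i j assume "i < dim_row (1\<^sub>m n :: complex mat)" "j < dim_col (1\<^sub>m n :: complex mat)"
    then have i: "i < n" and j: "j < n"
      by auto
    have "(B * M) $$ (i, j) = (\<Sum>k\<in>{0..<n}. cnj (A $$ (k, i)) * M $$ (k, j))"
      using i j by (simp add: scalar_prod_def B_def dims)
    moreover have "M $$ (k, j) = cnj (M $$ (j, k))" if "k < n" for k
      using herm j that unfolding hermitian_mat_def dims by blast
    ultimately have "(B * M) $$ (i, j) = cnj (\<Sum>k\<in>{0..<n}. M $$ (j, k) * A $$ (k, i))"
      unfolding cnj_sum by (auto intro: sum.cong simp: mult.commute)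
    also have "(\<Sum>k\<in>{0..<n}. M $$ (j, k) * A $$ (k, i)) = (M * A) $$ (j, i)"
      using i j by (simp add: scalar_prod_def dims)
    finally show "(B * M) $$ (i, j) = 1\<^sub>m n $$ (i, j)"
      using i j MA by auto
  qed (use B dims in auto)
  have "B = B * (M * A)"
    using B by (simp add: MA)
  also have "\<dots> = (B * M) * A"
    using A B M by (simp add: assoc_mult_mat[of _ n n _ n _ n])
  also have "\<dots> = A"
    using A \<open>B * M = 1\<^sub>m n\<close> by simp
  finally have BA: "B = A" .
  show ?thesis
    unfolding hermitian_mat_def
  proof (intro conjI allI impI)
    show "square_mat A"
      using A by simp
    fix i j assume "i < dim_row A" "j < dim_row A"
    then have "B $$ (j, i) = cnj (A $$ (i, j))"
      by (simp add: B_def dims)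
    then show "A $$ (j, i) = cnj (A $$ (i, j))"
      by (simp only: BA)
  qed
qed

lemma ex_nonzero_index:
  assumes "v \<in> carrier_vec n" "v \<noteq> 0\<^sub>v n"
  obtains k where "k < n" "v $ k \<noteq> 0"
proof -
  have "\<not> (\<forall>k<n. v $ k = 0)"
  proof
    assume "\<forall>k<n. v $ k = 0"
    then have "v = 0\<^sub>v n"
      using assms(1) by (intro eq_vecI) auto
    with assms(2) show False ..
  qed
  then show thesis
    using that by blast
qed

lemma row_sum_le_norm_inf_mat:
  assumes "i < dim_row A"
  shows "(\<Sum>j<dim_col A. cmod (A $$ (i, j))) \<le> norm_inf_mat A"
  unfolding norm_inf_mat_def using assms by (intro Max_ge) auto

lemma norm_inf_mat_le:
  assumes "0 < dim_row A" and "\<And>i. i < dim_row A \<Longrightarrow> (\<Sum>j<dim_col A. cmod (A $$ (i, j))) \<le> Y"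
  shows "norm_inf_mat A \<le> Y"
  unfolding norm_inf_mat_def using assms by (subst Max_le_iff) auto

lemma mult_mat_vec_cnj_sgn_row:
  assumes "i < dim_row A"
  shows "(A *\<^sub>v vec (dim_col A) (\<lambda>j. cnj (sgn (A $$ (i, j))))) $ i
    = of_real (\<Sum>j<dim_col A. cmod (A $$ (i, j)))"
  using assms by (simp add: scalar_prod_def mult_cnj_sgn atLeast0LessThan)

section \<open>The matrices alpha I + C_n and their inverses\<close>

definition Mmat :: "real \<Rightarrow> nat \<Rightarrow> complex mat" where
  "Mmat \<alpha> n = complex_of_real \<alpha> \<cdot>\<^sub>m 1\<^sub>m n + Cmat n"

lemma Amat_eq_mat_inv_Mmat: "Amat \<alpha> n = mat_inv (Mmat \<alpha> n)"
  unfolding Amat_def Mmat_def ..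

lemma Mmat_carrier [simp]: "Mmat \<alpha> n \<in> carrier_mat n n"
  unfolding Mmat_def Cmat_def by auto

lemma dim_Mmat [simp]: "dim_row (Mmat \<alpha> n) = n" "dim_col (Mmat \<alpha> n) = n"
  using carrier_matD[OF Mmat_carrier[of \<alpha> n]] by auto

lemma Mmat_index:
  assumes "i < n" "j < n"
  shows "Mmat \<alpha> n $$ (i, j) = of_real ((if i = j then \<alpha> else 0) + 1 / real (max (i+1) (j+1)))"
  using assms unfolding Mmat_def Cmat_def by (simp add: of_real_divide)

lemma Mmat_hermitian: "hermitian_mat (Mmat \<alpha> n)"
  unfolding hermitian_mat_def by (auto simp: Mmat_index max.commute)

lemma Mmat_mult_vec_index:
  assumes "v \<in> carrier_vec n" "k < n"
  shows "(Mmat \<alpha> n *\<^sub>v v) $ k = of_real \<alpha> * v $ k + Capply n (\<lambda>j. v $ j) k"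
proof -
  have "(Mmat \<alpha> n *\<^sub>v v) $ k = (\<Sum>j<n. Mmat \<alpha> n $$ (k, j) * v $ j)"
    using assms by (simp add: scalar_prod_def atLeast0LessThan)
  also have "\<dots> = (\<Sum>j<n. (if k = j then of_real \<alpha> * v $ j else 0) + v $ j / of_nat (max (k+1) (j+1)))"
    using assms(2) by (intro sum.cong) (auto simp: Mmat_index distrib_right divide_inverse)
  also have "\<dots> = of_real \<alpha> * v $ k + Capply n (\<lambda>j. v $ j) k"
    unfolding Capply_def sum.distrib using assms(2) by simp
  finally show ?thesis .
qed

lemma Mmat_quadratic_form:
  assumes "u \<in> carrier_vec n"
  shows "u \<bullet>c (Mmat \<alpha> n *\<^sub>v u)
    = of_real (\<alpha> * (\<Sum>k<n. cmod (u $ k) ^ 2) + (\<Sum>m<n. layer_weight n m * cmod (\<Sum>j\<le>m. u $ j) ^ 2))"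
proof -
  have "u \<bullet>c (Mmat \<alpha> n *\<^sub>v u) = (\<Sum>k<n. u $ k * cnj ((Mmat \<alpha> n *\<^sub>v u) $ k))"
    by (simp add: scalar_prod_def atLeast0LessThan)
  also have "\<dots> = (\<Sum>k<n. of_real (\<alpha> * cmod (u $ k) ^ 2) + u $ k * cnj (Capply n (\<lambda>j. u $ j) k))"
  proof (intro sum.cong refl)
    fix k assume "k \<in> {..<n}"
    then have "(Mmat \<alpha> n *\<^sub>v u) $ k = of_real \<alpha> * u $ k + Capply n (\<lambda>j. u $ j) k"
      using assms by (simp only: Mmat_mult_vec_index lessThan_iff)
    then show "u $ k * cnj ((Mmat \<alpha> n *\<^sub>v u) $ k) = of_real (\<alpha> * cmod (u $ k) ^ 2) + u $ k * cnj (Capply n (\<lambda>j. u $ j) k)"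
      by (simp only:) (simp add: distrib_left mult.left_commute flip: complex_norm_square)
  qed
  also have "\<dots> = of_real (\<alpha> * (\<Sum>k<n. cmod (u $ k) ^ 2)) + (\<Sum>k<n. u $ k * cnj (Capply n (\<lambda>j. u $ j) k))"
    by (simp add: sum.distrib sum_distrib_left)
  also have "\<dots> = of_real (\<alpha> * (\<Sum>k<n. cmod (u $ k) ^ 2) + (\<Sum>m<n. layer_weight n m * cmod (\<Sum>j\<le>m. u $ j) ^ 2))"
    by (simp only: Capply_quadratic_form of_real_add)
  finally show ?thesis .
qed

lemma Mmat_mult_vec_eq_zero:
  assumes "\<alpha> > 0" "v \<in> carrier_vec n" "Mmat \<alpha> n *\<^sub>v v = 0\<^sub>v n"
  shows "v = 0\<^sub>v n"
proof (rule eq_vecI)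
  fix i assume "i < dim_vec (0\<^sub>v n :: complex vec)"
  then have "i < n"
    by simp
  have "cmod (of_real \<alpha> * v $ k + Capply n (\<lambda>j. v $ j) k) \<le> 0" if "k < n" for k
    using assms that by (simp flip: Mmat_mult_vec_index)
  then have "cmod (v $ i) \<le> 2 * 0 / \<alpha>"
    using Capply_solution_bound[OF assms(1) _ \<open>i < n\<close>] by blast
  then show "v $ i = 0\<^sub>v n $ i"
    using \<open>i < n\<close> by simp
qed (use assms in simp)

lemma det_Mmat_nonzero:
  assumes "\<alpha> > 0"
  shows "det (Mmat \<alpha> n) \<noteq> 0"
  using det_0_iff_vec_prod_zero[OF Mmat_carrier] Mmat_mult_vec_eq_zero[OF assms] by blast

lemma Amat_carrier: "\<alpha> > 0 \<Longrightarrow> Amat \<alpha> n \<in> carrier_mat n n"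
  and Mmat_mult_Amat: "\<alpha> > 0 \<Longrightarrow> Mmat \<alpha> n * Amat \<alpha> n = 1\<^sub>m n"
  and Amat_mult_Mmat: "\<alpha> > 0 \<Longrightarrow> Amat \<alpha> n * Mmat \<alpha> n = 1\<^sub>m n"
  using mat_inv_inverts[OF Mmat_carrier det_Mmat_nonzero] by (simp_all add: Amat_eq_mat_inv_Mmat)

lemma dim_Amat:
  assumes "\<alpha> > 0"
  shows "dim_row (Amat \<alpha> n) = n" "dim_col (Amat \<alpha> n) = n"
  using carrier_matD[OF Amat_carrier[OF assms]] by auto

lemma Mmat_mult_vec_Amat:
  assumes "\<alpha> > 0" "v \<in> carrier_vec n"
  shows "Mmat \<alpha> n *\<^sub>v (Amat \<alpha> n *\<^sub>v v) = v"
  using assms Amat_carrier[OF assms(1)]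
  by (simp add: assoc_mult_mat_vec[of _ n n _ n, symmetric] Mmat_mult_Amat)

lemma mat_inv_Amat: "\<alpha> > 0 \<Longrightarrow> mat_inv (Amat \<alpha> n) = Mmat \<alpha> n"
  using Amat_carrier Amat_mult_Mmat Mmat_mult_Amat by (intro mat_inv_eqI) auto

lemma Amat_hermitian_pos_def:
  assumes "\<alpha> > 0"
  shows "hermitian_pos_def (Amat \<alpha> n)"
  unfolding hermitian_pos_def_def
proof (intro conjI ballI impI)
  show "hermitian_mat (Amat \<alpha> n)"
    by (rule hermitian_mat_inverse[OF Mmat_hermitian Mmat_carrier Amat_carrier[OF assms] Mmat_mult_Amat[OF assms]])
  fix v :: "complex vec" assume "v \<in> carrier_vec (dim_row (Amat \<alpha> n))" "v \<noteq> 0\<^sub>v (dim_row (Amat \<alpha> n))"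
  then have v: "v \<in> carrier_vec n" and "v \<noteq> 0\<^sub>v n"
    using dim_Amat[OF assms] by auto
  define u where "u = Amat \<alpha> n *\<^sub>v v"
  have u: "u \<in> carrier_vec n"
    unfolding u_def using Amat_carrier[OF assms] v by (rule mult_mat_vec_carrier)
  have Mu: "Mmat \<alpha> n *\<^sub>v u = v"
    unfolding u_def by (rule Mmat_mult_vec_Amat[OF assms v])
  have "u \<noteq> 0\<^sub>v n"
    using Mu \<open>v \<noteq> 0\<^sub>v n\<close> by auto
  with u obtain k where "k < n" "u $ k \<noteq> 0"
    by (rule ex_nonzero_index)
  then have "0 < \<alpha> * (\<Sum>k<n. cmod (u $ k) ^ 2)"
    using assms by (intro mult_pos_pos sum_pos2[of _ k]) auto
  moreover have "0 \<le> (\<Sum>m<n. layer_weight n m * cmod (\<Sum>j\<le>m. u $ j) ^ 2)"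
    by (intro sum_nonneg mult_nonneg_nonneg) (auto simp: less_imp_le layer_weight_pos)
  moreover have "(Amat \<alpha> n *\<^sub>v v) \<bullet>c v = u \<bullet>c (Mmat \<alpha> n *\<^sub>v u)"
    using Mu by (simp add: u_def)
  ultimately show "let q = (Amat \<alpha> n *\<^sub>v v) \<bullet>c v in q \<in> \<real> \<and> 0 < Re q"
    using Mmat_quadratic_form[OF u, of \<alpha>] by (simp add: Let_def)
qed

lemma Amat_eigenvalue_lower_bound:
  assumes "\<alpha> > 0" and "eigenvalue (Amat \<alpha> n) z"
  shows "1 / (\<alpha> + 4) \<le> cmod z"
proof -
  obtain v where v: "v \<in> carrier_vec n" "v \<noteq> 0\<^sub>v n" and Av: "Amat \<alpha> n *\<^sub>v v = z \<cdot>\<^sub>v v"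
    using assms dim_Amat[OF assms(1)] unfolding eigenvalue_def eigenvector_def by auto
  have "v = Mmat \<alpha> n *\<^sub>v (z \<cdot>\<^sub>v v)"
    using Mmat_mult_vec_Amat[OF assms(1) v(1)] Av by simp
  also have "\<dots> = z \<cdot>\<^sub>v (Mmat \<alpha> n *\<^sub>v v)"
    using v(1) by (simp add: mult_mat_vec[OF Mmat_carrier])
  finally have vz: "v $ k = z * (Mmat \<alpha> n *\<^sub>v v) $ k" if "k < n" for k
    using that by (metis dim_Mmat(1) dim_mult_mat_vec index_smult_vec(1))
  obtain k0 where "k0 < n" "v $ k0 \<noteq> 0"
    using v by (rule ex_nonzero_index)
  then have "z \<noteq> 0"
    using vz by auto
  have "of_real \<alpha> * v $ k + Capply n (\<lambda>j. v $ j) k = (1 / z) * v $ k" if "k < n" for k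
    using vz[OF that] \<open>z \<noteq> 0\<close> Mmat_mult_vec_index[OF v(1) that] by (simp add: field_simps)
  then have "cmod (1 / z) \<le> \<alpha> + 4"
    using Capply_eigenvalue_bound[of \<alpha> n "\<lambda>j. v $ j" "1 / z" k0] assms(1) \<open>k0 < n\<close> \<open>v $ k0 \<noteq> 0\<close>
    by auto
  then show ?thesis
    using \<open>z \<noteq> 0\<close> assms(1) by (simp add: norm_divide field_simps)
qed

lemma Min_norm_spectrum_Amat_ge:
  assumes "\<alpha> > 0" "n \<ge> 1"
  shows "1 / (\<alpha> + 4) \<le> Min (cmod ` spectrum_mat (Amat \<alpha> n))"
proof -
  have "spectrum_mat (Amat \<alpha> n) = spectrum (Amat \<alpha> n)"
    by (simp add: spectrum_mat_def spectrum_def)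
  then have "finite (spectrum_mat (Amat \<alpha> n))" "spectrum_mat (Amat \<alpha> n) \<noteq> {}"
    using card_finite_spectrum(1)[OF Amat_carrier] spectrum_non_empty[OF Amat_carrier] assms by auto
  then show ?thesis
    using Amat_eigenvalue_lower_bound[OF assms(1)] by (simp add: spectrum_mat_def)
qed

lemma norm_inf_mat_Amat_le:
  assumes "\<alpha> > 0" "n \<ge> 1"
  shows "norm_inf_mat (Amat \<alpha> n) \<le> 2 / \<alpha>"
proof (rule norm_inf_mat_le)
  have A: "Amat \<alpha> n \<in> carrier_mat n n"
    by (rule Amat_carrier[OF assms(1)])
  then show "0 < dim_row (Amat \<alpha> n)"
    using assms(2) by simp
  fix i assume "i < dim_row (Amat \<alpha> n)"
  then have "i < n"
    using A by simp
  \<comment> \<open>The i-th row sum of A_n is the i-th entry of the solution u of M_n u = y, where |y_k| <= 1.\<close>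
  define y where "y = vec n (\<lambda>j. cnj (sgn (Amat \<alpha> n $$ (i, j))))"
  define u where "u = Amat \<alpha> n *\<^sub>v y"
  have y: "y \<in> carrier_vec n"
    by (simp add: y_def)
  have u: "u \<in> carrier_vec n"
    unfolding u_def using A y by (rule mult_mat_vec_carrier)
  have Mu: "Mmat \<alpha> n *\<^sub>v u = y"
    unfolding u_def by (rule Mmat_mult_vec_Amat[OF assms(1) y])
  have "cmod (of_real \<alpha> * u $ k + Capply n (\<lambda>j. u $ j) k) \<le> 1" if "k < n" for k
  proof -
    have "of_real \<alpha> * u $ k + Capply n (\<lambda>j. u $ j) k = (Mmat \<alpha> n *\<^sub>v u) $ k"
      by (rule Mmat_mult_vec_index[OF u that, symmetric])
    also have "\<dots> = cnj (sgn (Amat \<alpha> n $$ (i, k)))"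
      using that by (simp add: Mu y_def)
    finally show ?thesis
      by (simp add: norm_sgn)
  qed
  then have "cmod (u $ i) \<le> 2 * 1 / \<alpha>"
    using Capply_solution_bound[OF assms(1) _ \<open>i < n\<close>] by blast
  moreover have "u $ i = of_real (\<Sum>j<dim_col (Amat \<alpha> n). cmod (Amat \<alpha> n $$ (i, j)))"
    using mult_mat_vec_cnj_sgn_row[of i "Amat \<alpha> n"] A \<open>i < n\<close> by (simp add: u_def y_def)
  moreover have "0 \<le> (\<Sum>j<dim_col (Amat \<alpha> n). cmod (Amat \<alpha> n $$ (i, j)))"
    by (simp add: sum_nonneg)
  ultimately show "(\<Sum>j<dim_col (Amat \<alpha> n). cmod (Amat \<alpha> n $$ (i, j))) \<le> 2 / \<alpha>"
    by (simp del: of_real_sum)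
qed

lemma harm_le_norm_inf_mat_Mmat:
  assumes "\<alpha> \<ge> 0" "n \<ge> 1"
  shows "harm n \<le> norm_inf_mat (Mmat \<alpha> n)"
proof -
  have "harm n = (\<Sum>j<n. 1 / real (j+1))"
    by (simp add: harm_altdef inverse_eq_divide)
  also have "\<dots> \<le> (\<Sum>j<n. cmod (Mmat \<alpha> n $$ (0, j)))"
  proof (intro sum_mono)
    fix j assume "j \<in> {..<n}"
    then have "cmod (Mmat \<alpha> n $$ (0, j)) = \<bar>(if 0 = j then \<alpha> else 0) + 1 / real (max (0+1) (j+1))\<bar>"
      using assms(2) by (simp only: Mmat_index norm_of_real lessThan_iff)
    then show "1 / real (j+1) \<le> cmod (Mmat \<alpha> n $$ (0, j))"
      using assms(1) by simp
  qed
  also have "\<dots> \<le> norm_inf_mat (Mmat \<alpha> n)"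
    using row_sum_le_norm_inf_mat[of 0 "Mmat \<alpha> n"] assms(2) by simp
  finally show ?thesis .
qed

theorem proposition9:
  fixes \<alpha> :: real
  assumes "\<alpha> > 0"
  shows "(\<forall>n \<ge> 1. hermitian_pos_def (Amat \<alpha> n))
    \<and> (INF n \<in> {1..}. Min (cmod ` spectrum_mat (Amat \<alpha> n))) > 0
    \<and> bdd_above ((\<lambda>n. norm_inf_mat (Amat \<alpha> n)) ` {1..})
    \<and> \<not> bdd_above ((\<lambda>n. norm_inf_mat (mat_inv (Amat \<alpha> n))) ` {1..})"
proof (intro conjI)
  show "\<forall>n \<ge> 1. hermitian_pos_def (Amat \<alpha> n)"
    using Amat_hermitian_pos_def[OF assms] by blast
  have "1 / (\<alpha> + 4) \<le> (INF n \<in> {1..}. Min (cmod ` spectrum_mat (Amat \<alpha> n)))"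
    using Min_norm_spectrum_Amat_ge[OF assms] by (intro cINF_greatest) auto
  moreover have "0 < 1 / (\<alpha> + 4)"
    using assms by simp
  ultimately show "(INF n \<in> {1..}. Min (cmod ` spectrum_mat (Amat \<alpha> n))) > 0"
    by linarith
  show "bdd_above ((\<lambda>n. norm_inf_mat (Amat \<alpha> n)) ` {1..})"
    using norm_inf_mat_Amat_le[OF assms] by (intro bdd_aboveI2[where M = "2 / \<alpha>"]) auto
  show "\<not> bdd_above ((\<lambda>n. norm_inf_mat (mat_inv (Amat \<alpha> n))) ` {1..})"
    using harm_le_norm_inf_mat_Mmat[of \<alpha>] assms by (intro not_bdd_above_if_harm_le) (simp add: mat_inv_Amat)
qed

end
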